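(* Let $A$ be a calibrated $R$-superalgebra and $V$ a calibrated $A$-supermodule. Then $\tilde\Gamma^dV\subseteq\Gamma^dV$ is a $\tilde\Gamma^dA$-submodule, i.e. $\eta\, y\in\tilde\Gamma^dV$ for all $\eta\in\tilde\Gamma^dA$ and $y\in\tilde\Gamma^dV$.
   Context: Let $R$ be a principal ideal domain of characteristic $0$. A calibrated $R$-supermodule is a free $R$-supermodule $V=V_{\bar0}\oplus V_{\bar1}$ of finite rank with a decomposition $V_{\bar0}=V_{\mathfrak a}\oplus V_{\mathfrak c}$ into free $R$-submodules; choose bases $B_{\mathfrak a},B_{\mathfrak c},B_{\bar1}$, let $B$ be their union, fix a total order on $B$. $\mathfrak S_d$ acts on $V^{\otimes d}$ by $(v_1\otimes\cdots\otimes v_d)^\sigma=(-1)^{\langle\sigma;\mathbf v\rangle}v_{\sigma1}\otimes\cdots\otimes v_{\sigma d}$, $\langle\sigma;\mathbf v\rangle$ = number of $k<l$ with $\sigma^{-1}k>\sigma^{-1}l$ and $v_k,v_l$ odd; $\Gamma^dV$ = invariants. For $\mathbf b\in B^d$: $\langle\mathbf b\rangle$ = number of $k<l$ with $b_k,b_l\in B_{\bar1}$, $b_k>b_l$; $[\mathbf b]^!_{\mathfrak c}=\prod_{b\in B_{\mathfrak c}}\#\{k:b_k=b\}!$; $\mathrm{Seq}(B,d)$ = tuples in which only elements of $B_{\mathfrak a}\sqcup B_{\mathfrak c}$ may repeat; $x_{\mathbf b}=\sum(-1)^{\langle\mathbf b\rangle+\langle\mathbf b'\rangle}b'_1\otimes\cdots\otimes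 b'_d$ over distinct place-permutations $\mathbf b'$ of $\mathbf b$; $y_{\mathbf b}=[\mathbf b]^!_{\mathfrak c}x_{\mathbf b}$; $\tilde\Gamma^dV=\mathrm{span}_R\{y_{\mathbf b}:\mathbf b\in\mathrm{Seq}(B,d)\}$. A calibrated $R$-superalgebra is an $R$-superalgebra $A$, free of finite rank, with a decomposition $A_{\bar0}=\mathfrak a\oplus\mathfrak c$ into free $R$-submodules such that $\mathfrak a$ is a unital subalgebra; regarding $A$ as a calibrated supermodule gives $\tilde\Gamma^dA\subseteq\Gamma^dA\subseteq A^{\otimes d}$, where $A^{\otimes d}$ is a superalgebra with $(a_1\otimes\cdots\otimes a_d)(b_1\otimes\cdots\otimes b_d)=(-1)^{\langle\mathbf a,\mathbf b\rangle}a_1b_1\otimes\cdots\otimes a_db_d$ ($\langle\mathbf a,\mathbf b\rangle$ = number of $k>l$ with $a_k,b_l$ odd); $\tilde\Gamma^dA$ is a unital subsuperalgebra of $\Gamma^dA$. If $V$ is an $A$-supermodule then $V^{\otimes d}$ is an $A^{\otimes d}$-supermodule via $(a_1\otimes\cdots\otimes a_d)(v_1\otimes\cdots\otimes v_d)=(-1)^{\langle\mathbf a,\mathbf v\rangle}a_1v_1\otimes\cdots\otimes a_dv_d$, and $\Gamma^dV$ is a $\Gamma^dA$-submodule. A calibrated $A$-supermodule is an $A$-supermodule $V$ which is a calibrated $R$-supermodule with $\mathfrak aV_{\mathfrak a}\subseteq V_{\mathfrak a}$. *)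

theory Defs
  imports Main "HOL-Library.Multiset"
begin

definition is_ideal :: "'r::comm_ring_1 set \<Rightarrow> bool" where
  "is_ideal I \<longleftrightarrow> 0 \<in> I \<and> (\<forall>x\<in>I. \<forall>y\<in>I. x + y \<in> I) \<and> (\<forall>r x. x \<in> I \<longrightarrow> r * x \<in> I)"

definition pid_ring :: "'r::idom itself \<Rightarrow> bool" where
  "pid_ring _ \<longleftrightarrow> (\<forall>I::'r set. is_ideal I \<longrightarrow> (\<exists>a. I = {a * x | x. True}))"

definition tuples :: "'b set \<Rightarrow> nat \<Rightarrow> 'b list set" where
  "tuples S d = {xs. set xs \<subseteq> S \<and> length xs = d}"

definition odd_inv :: "'b::linorder set \<Rightarrow> 'b list \<Rightarrow> nat" where
  "odd_inv Od bs = card {(k,l). k < l \<and> l < length bs \<and> bs!k \<in> Od \<and> bs!l \<in> Od \<and> bs!k > bs!l}"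

definition fact_c :: "'b set \<Rightarrow> 'b list \<Rightarrow> nat" where
  "fact_c Bc bs = (\<Prod>b\<in>Bc. fact (count (mset bs) b))"

definition Seq :: "'b set \<Rightarrow> 'b set \<Rightarrow> 'b set \<Rightarrow> nat \<Rightarrow> 'b list set" where
  "Seq Ba Bc B1 d = {bs \<in> tuples (Ba \<union> Bc \<union> B1) d.
      \<forall>k l. k < l \<and> l < d \<and> bs!k = bs!l \<longrightarrow> bs!k \<in> Ba \<union> Bc}"

text \<open>x_b as coordinate function on B^d: sum over distinct place permutations b' of b.\<close>
definition x_vec :: "'b::linorder set \<Rightarrow> 'b list \<Rightarrow> 'b list \<Rightarrow> 'r::comm_ring_1" where
  "x_vec B1 bs = (\<lambda>bs'. if mset bs' = mset bs then (-1) ^ (odd_inv B1 bs + odd_inv B1 bs') else 0)"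

definition y_vec :: "'b set \<Rightarrow> 'b::linorder set \<Rightarrow> 'b list \<Rightarrow> 'b list \<Rightarrow> 'r::comm_ring_1" where
  "y_vec Bc B1 bs = (\<lambda>bs'. of_nat (fact_c Bc bs) * x_vec B1 bs bs')"

definition Gamma_tilde :: "'b::linorder set \<Rightarrow> 'b set \<Rightarrow> 'b set \<Rightarrow> nat \<Rightarrow> ('b list \<Rightarrow> 'r::comm_ring_1) set" where
  "Gamma_tilde Ba Bc B1 d =
     {f. \<exists>c. f = (\<lambda>w. \<Sum>bs\<in>Seq Ba Bc B1 d. c bs * y_vec Bc B1 bs w)}"

text \<open>A is free with basis C = Ca \<union> Cc \<union> C1 (bases of \<a>, \<c>, A_1);
  mul x y z = coefficient of z in x*y; one z = coefficient of z in 1.\<close>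
definition calibrated_superalgebra ::
  "'c set \<Rightarrow> 'c set \<Rightarrow> 'c set \<Rightarrow> ('c \<Rightarrow> 'c \<Rightarrow> 'c \<Rightarrow> 'r::comm_ring_1) \<Rightarrow> ('c \<Rightarrow> 'r) \<Rightarrow> bool" where
  "calibrated_superalgebra Ca Cc C1 mul one \<longleftrightarrow>
     (let C = Ca \<union> Cc \<union> C1 in
     finite C \<and> Ca \<inter> Cc = {} \<and> Ca \<inter> C1 = {} \<and> Cc \<inter> C1 = {} \<and>
     (\<forall>x\<in>C. \<forall>y\<in>C. \<forall>z. mul x y z \<noteq> 0 \<longrightarrow> z \<in> C) \<and>
     (\<forall>z. one z \<noteq> 0 \<longrightarrow> z \<in> C) \<and>
     (\<forall>x\<in>C. \<forall>y\<in>C. \<forall>z\<in>C. \<forall>w.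
        (\<Sum>u\<in>C. mul x y u * mul u z w) = (\<Sum>u\<in>C. mul y z u * mul x u w)) \<and>
     (\<forall>x\<in>C. \<forall>w. (\<Sum>u\<in>C. one u * mul u x w) = (if w = x then 1 else 0)) \<and>
     (\<forall>x\<in>C. \<forall>w. (\<Sum>u\<in>C. one u * mul x u w) = (if w = x then 1 else 0)) \<and>
     (\<forall>x\<in>C. \<forall>y\<in>C. \<forall>z. mul x y z \<noteq> 0 \<longrightarrow> ((z \<in> C1) \<longleftrightarrow> ((x \<in> C1) \<noteq> (y \<in> C1)))) \<and>
     (\<forall>z. one z \<noteq> 0 \<longrightarrow> z \<in> Ca) \<and>
     (\<forall>x\<in>Ca. \<forall>y\<in>Ca. \<forall>z. mul x y z \<noteq> 0 \<longrightarrow> z \<in> Ca))"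

text \<open>V is free with basis B = Ba \<union> Bc \<union> B1; act x v w = coefficient of w in x v.\<close>
definition calibrated_supermodule ::
  "'c set \<Rightarrow> 'c set \<Rightarrow> 'c set \<Rightarrow> ('c \<Rightarrow> 'c \<Rightarrow> 'c \<Rightarrow> 'r::comm_ring_1) \<Rightarrow> ('c \<Rightarrow> 'r) \<Rightarrow>
   'b set \<Rightarrow> 'b set \<Rightarrow> 'b set \<Rightarrow> ('c \<Rightarrow> 'b \<Rightarrow> 'b \<Rightarrow> 'r) \<Rightarrow> bool" where
  "calibrated_supermodule Ca Cc C1 mul one Ba Bc B1 act \<longleftrightarrow>
     (let C = Ca \<union> Cc \<union> C1; B = Ba \<union> Bc \<union> B1 in
     finite B \<and> Ba \<inter> Bc = {} \<and> Ba \<inter> B1 = {} \<and> Bc \<inter> B1 = {} \<and>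
     (\<forall>x\<in>C. \<forall>v\<in>B. \<forall>w. act x v w \<noteq> 0 \<longrightarrow> w \<in> B) \<and>
     (\<forall>x\<in>C. \<forall>y\<in>C. \<forall>v\<in>B. \<forall>w.
        (\<Sum>u\<in>C. mul x y u * act u v w) = (\<Sum>t\<in>B. act y v t * act x t w)) \<and>
     (\<forall>v\<in>B. \<forall>w. (\<Sum>u\<in>C. one u * act u v w) = (if w = v then 1 else 0)) \<and>
     (\<forall>x\<in>C. \<forall>v\<in>B. \<forall>w. act x v w \<noteq> 0 \<longrightarrow> ((w \<in> B1) \<longleftrightarrow> ((x \<in> C1) \<noteq> (v \<in> B1)))) \<and>
     (\<forall>x\<in>Ca. \<forall>v\<in>Ba. \<forall>w. act x v w \<noteq> 0 \<longrightarrow> w \<in> Ba))"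

definition cross_odd :: "'c set \<Rightarrow> 'b set \<Rightarrow> 'c list \<Rightarrow> 'b list \<Rightarrow> nat" where
  "cross_odd C1 B1 as vs = card {(k,l). l < k \<and> k < length as \<and> as!k \<in> C1 \<and> vs!l \<in> B1}"

text \<open>Action of A^{\<otimes>d} on V^{\<otimes>d}, in coordinates.\<close>
definition tensor_act ::
  "'c set \<Rightarrow> 'c set \<Rightarrow> 'c set \<Rightarrow> 'b set \<Rightarrow> 'b set \<Rightarrow> 'b set \<Rightarrow> ('c \<Rightarrow> 'b \<Rightarrow> 'b \<Rightarrow> 'r::comm_ring_1) \<Rightarrow>
   nat \<Rightarrow> ('c list \<Rightarrow> 'r) \<Rightarrow> ('b list \<Rightarrow> 'r) \<Rightarrow> 'b list \<Rightarrow> 'r" where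
  "tensor_act Ca Cc C1 Ba Bc B1 act d eta y =
     (\<lambda>w. if w \<in> tuples (Ba \<union> Bc \<union> B1) d then
        (\<Sum>as\<in>tuples (Ca \<union> Cc \<union> C1) d. \<Sum>vs\<in>tuples (Ba \<union> Bc \<union> B1) d.
           eta as * y vs * (-1) ^ cross_odd C1 B1 as vs * (\<Prod>k<d. act (as!k) (vs!k) (w!k)))
      else 0)"

end

(* An element of Gamma^d V is a coordinate function on B^d that is supersymmetric: swapping two
   adjacent arguments multiplies it by -1 exactly when both are odd.  Such a function lies in the
   span of the y_b if it vanishes off B^d and its value at every sorted b in Seq(B,d) is divisible
   by [b]!_c: the coefficient of y_b is read off at b, and the values at tuples with a repeated odd
   entry vanish because R has characteristic 0 and no zero divisors.

   By the Koszul sign rule the action of A^(x)d preserves supersymmetry, so by bilinearity it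
   remains to show that [w]!_c divides the coefficient of w in y_a y_b.  Its terms, indexed by
   pairs of tuples (as, vs), are constant on the fibres of the map sending (as, vs) to the multiset
   M of triples (as_k, vs_k, w_k), and a fibre has [w]!/[M]! elements, [.]! being the product of
   the factorials of all multiplicities.  A triple whose third entry lies in B_c can repeat only if
   its first entry lies in C_c or its second in B_c, since odd entries of a and b do not repeat and
   C_a maps B_a into B_a.  Hence [M]! divides [a]!_c [b]!_c times the factorials of the
   multiplicities of w outside B_c, so [w]!_c divides [a]!_c [b]!_c [w]!/[M]!. *)

theory Submission
  imports Defs "HOL-Library.Product_Lexorder" "HOL-Combinatorics.Multiset_Permutations"
begin

section \<open>Adjacent transpositions and Koszul signs\<close>

definition swap_adj :: "nat \<Rightarrow> 'a list \<Rightarrow> 'a list" where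
  "swap_adj i = permute_list (transpose i (Suc i))"

lemma transpose_Suc_permutes: "Suc i < n \<Longrightarrow> transpose i (Suc i) permutes {..<n}"
  by (rule permutes_swap_id) auto

lemma length_swap_adj [simp]: "length (swap_adj i xs) = length xs"
  by (simp add: swap_adj_def)

lemma nth_swap_adj:
  "Suc i < length xs \<Longrightarrow> k < length xs \<Longrightarrow> swap_adj i xs ! k = xs ! transpose i (Suc i) k"
  by (simp add: swap_adj_def permute_list_nth transpose_Suc_permutes)

lemma nth_swap_adj_first [simp]: "Suc i < length xs \<Longrightarrow> swap_adj i xs ! i = xs ! Suc i"
  and nth_swap_adj_second [simp]: "Suc i < length xs \<Longrightarrow> swap_adj i xs ! Suc i = xs ! i"
  by (simp_all add: nth_swap_adj)

lemma mset_swap_adj [simp]: "Suc i < length xs \<Longrightarrow> mset (swap_adj i xs) = mset xs"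
  by (simp add: swap_adj_def transpose_Suc_permutes)

lemma set_swap_adj [simp]: "Suc i < length xs \<Longrightarrow> set (swap_adj i xs) = set xs"
  by (simp add: swap_adj_def transpose_Suc_permutes)

lemma swap_adj_swap_adj [simp]: "Suc i < length xs \<Longrightarrow> swap_adj i (swap_adj i xs) = xs"
  by (rule nth_equalityI) (auto simp: nth_swap_adj transpose_def)

lemma map_swap_adj: "Suc i < length xs \<Longrightarrow> map f (swap_adj i xs) = swap_adj i (map f xs)"
  by (simp add: swap_adj_def permute_list_map transpose_Suc_permutes)

lemma zip_swap_adj:
  "Suc i < length xs \<Longrightarrow> length ys = length xs \<Longrightarrow>
   zip (swap_adj i xs) (swap_adj i ys) = swap_adj i (zip xs ys)"
  by (rule nth_equalityI) (auto simp: nth_swap_adj transpose_def)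

lemma swap_adj_same: "Suc i < length xs \<Longrightarrow> xs ! i = xs ! Suc i \<Longrightarrow> swap_adj i xs = xs"
  by (rule nth_equalityI) (auto simp: nth_swap_adj transpose_def)

lemma sort_swap_adj: "Suc i < length xs \<Longrightarrow> sort (swap_adj i xs) = sort xs"
  by (rule properties_for_sort) auto

definition pair_count :: "('a \<Rightarrow> 'a \<Rightarrow> bool) \<Rightarrow> 'a list \<Rightarrow> nat" where
  "pair_count P xs = card {(k, l). k < l \<and> l < length xs \<and> P (xs ! k) (xs ! l)}"

lemma transpose_Suc_less_iff:
  "transpose i (Suc i) k < transpose i (Suc i) l \<and> (transpose i (Suc i) k, transpose i (Suc i) l) \<noteq> (i, Suc i)
   \<longleftrightarrow> k < l \<and> (k, l) \<noteq> (i, Suc i)"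
  by (auto simp: transpose_def)

lemma transpose_Suc_less_bound: "Suc i < n \<Longrightarrow> transpose i (Suc i) l < n \<longleftrightarrow> l < n"
  by (auto simp: transpose_def)

lemma pair_count_swap_adj:
  assumes i: "Suc i < length xs"
  shows "pair_count P (swap_adj i xs) + of_bool (P (xs ! i) (xs ! Suc i))
       = pair_count P xs + of_bool (P (xs ! Suc i) (xs ! i))"
proof -
  let ?t = "transpose i (Suc i)"
  define S where "S ys = {(k, l). k < l \<and> l < length xs \<and> P (ys ! k) (ys ! l)}" for ys
  have fin: "finite (S ys)" for ys
    by (rule finite_subset[of _ "{..<length xs} \<times> {..<length xs}"]) (auto simp: S_def)
  have mem: "(k, l) \<in> S (swap_adj i xs) - {(i, Suc i)} \<longleftrightarrow> (?t k, ?t l) \<in> S xs - {(i, Suc i)}" for k l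
    using i transpose_Suc_less_iff[of i k l] transpose_Suc_less_bound[OF i, of l]
      nth_swap_adj[OF i, of k] nth_swap_adj[OF i, of l]
    unfolding S_def by auto
  have "S (swap_adj i xs) - {(i, Suc i)} = map_prod ?t ?t -` (S xs - {(i, Suc i)})"
    by (rule set_eqI) (use mem in \<open>simp add: split_paired_all\<close>)
  moreover have "inj (map_prod ?t ?t)" "surj (map_prod ?t ?t)"
    using map_prod_inj_on[OF inj_transpose inj_transpose] map_prod_surj[OF surj_transpose surj_transpose]
    by simp_all
  ultimately have "card (S (swap_adj i xs) - {(i, Suc i)}) = card (S xs - {(i, Suc i)})"
    by (simp add: card_vimage_inj)
  moreover have "card (S ys) = card (S ys - {(i, Suc i)}) + of_bool ((i, Suc i) \<in> S ys)" for ys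
    using card.remove[OF fin[of ys], of "(i, Suc i)"] by (cases "(i, Suc i) \<in> S ys") simp_all
  moreover have "pair_count P ys = card (S ys)" if "length ys = length xs" for ys
    using that by (simp add: pair_count_def S_def)
  moreover have "(i, Suc i) \<in> S xs \<longleftrightarrow> P (xs ! i) (xs ! Suc i)"
    and "(i, Suc i) \<in> S (swap_adj i xs) \<longleftrightarrow> P (xs ! Suc i) (xs ! i)"
    using i by (simp_all add: S_def)
  ultimately show ?thesis
    by simp
qed

lemma swap_adj_invariant_sort:
  fixes g :: "'a::linorder list \<Rightarrow> 'b"
  assumes invariant: "\<And>z i. Q (mset z) \<Longrightarrow> Suc i < length z \<Longrightarrow> g (swap_adj i z) = g z"
    and "Q (mset xs)"
  shows "g (sort xs) = g xs"
  using assms(2)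
proof (induction "pair_count (>) xs" arbitrary: xs rule: less_induct)
  case (less xs)
  show ?case
  proof (cases "sorted xs")
    case True
    then show ?thesis by (simp add: sorted_sort_id)
  next
    case False
    then obtain i where i: "Suc i < length xs" "xs ! i > xs ! Suc i"
      by (auto simp: sorted_iff_nth_Suc not_le)
    have "pair_count (>) (swap_adj i xs) < pair_count (>) xs"
      using pair_count_swap_adj[OF i(1), of "(>)"] i(2) not_less_iff_gr_or_eq[of "xs ! i" "xs ! Suc i"] by auto
    then have "g (sort (swap_adj i xs)) = g (swap_adj i xs)"
      using less i(1) by simp
    then show ?thesis
      using invariant[OF less.prems i(1)] by (simp add: sort_swap_adj[OF i(1)])
  qed
qed

lemma minus_one_power_shift:
  "m + of_bool p = n + of_bool q \<Longrightarrow>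
   (-1 :: 'r::comm_ring_1) ^ m = (-1) ^ n * (if p then -1 else 1) * (if q then -1 else 1)"
  by (cases p; cases q) auto

definition swap_sign :: "'a set \<Rightarrow> 'a list \<Rightarrow> nat \<Rightarrow> 'r::comm_ring_1" where
  "swap_sign Od xs i = (if xs ! i \<in> Od \<and> xs ! Suc i \<in> Od then -1 else 1)"

lemma swap_sign_square_left [simp]: "swap_sign Od xs i * (swap_sign Od xs i * a) = a"
  by (simp add: swap_sign_def)

lemma odd_inv_eq_pair_count: "odd_inv Od xs = pair_count (\<lambda>x y. x \<in> Od \<and> y \<in> Od \<and> x > y) xs"
  by (simp add: odd_inv_def pair_count_def)

lemma cross_odd_eq_pair_count:
  assumes "length vs = length as"
  shows "cross_odd C1 B1 as vs = pair_count (\<lambda>p q. snd p \<in> B1 \<and> fst q \<in> C1) (zip as vs)"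
proof -
  have "{(l, k). l < k \<and> k < length (zip as vs) \<and> snd (zip as vs ! l) \<in> B1 \<and> fst (zip as vs ! k) \<in> C1}
      = prod.swap ` {(k, l). l < k \<and> k < length as \<and> as ! k \<in> C1 \<and> vs ! l \<in> B1}"
    using assms by (auto simp: image_iff)
  then show ?thesis
    by (simp add: cross_odd_def pair_count_def card_image)
qed

lemma power_odd_inv_swap_adj:
  assumes i: "Suc i < length xs" and distinct: "xs ! i \<in> Od \<Longrightarrow> xs ! i \<noteq> xs ! Suc i"
  shows "(-1 :: 'r::comm_ring_1) ^ odd_inv Od (swap_adj i xs) = swap_sign Od xs i * (-1) ^ odd_inv Od xs"
proof -
  have "(-1 :: 'r) ^ odd_inv Od (swap_adj i xs) = (-1) ^ odd_inv Od xs *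
      (if xs ! i \<in> Od \<and> xs ! Suc i \<in> Od \<and> xs ! i > xs ! Suc i then -1 else 1) *
      (if xs ! Suc i \<in> Od \<and> xs ! i \<in> Od \<and> xs ! Suc i > xs ! i then -1 else 1)"
    using pair_count_swap_adj[OF i] by (intro minus_one_power_shift) (metis odd_inv_eq_pair_count)
  then show ?thesis
    using distinct by (auto simp: swap_sign_def)
qed

lemma power_cross_odd_swap_adj:
  assumes i: "Suc i < length as" and len: "length vs = length as"
  shows "(-1 :: 'r::comm_ring_1) ^ cross_odd C1 B1 (swap_adj i as) (swap_adj i vs) =
    (-1) ^ cross_odd C1 B1 as vs * (if vs ! i \<in> B1 \<and> as ! Suc i \<in> C1 then -1 else 1) *
    (if vs ! Suc i \<in> B1 \<and> as ! i \<in> C1 then -1 else 1)"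
  using pair_count_swap_adj[OF _, of i "zip as vs" "\<lambda>p q. snd p \<in> B1 \<and> fst q \<in> C1"] i len
  by (intro minus_one_power_shift) (simp add: cross_odd_eq_pair_count zip_swap_adj)

lemma power_cross_odd_swap_adj_parity:
  assumes i: "Suc i < length as" and len: "length vs = length as"
    and parity: "\<And>k. k \<in> {i, Suc i} \<Longrightarrow> (ws ! k \<in> B1) = ((as ! k \<in> C1) \<noteq> (vs ! k \<in> B1))"
  shows "(-1 :: 'r::comm_ring_1) ^ cross_odd C1 B1 (swap_adj i as) (swap_adj i vs) =
    swap_sign C1 as i * swap_sign B1 vs i * swap_sign B1 ws i * (-1) ^ cross_odd C1 B1 as vs"
  using parity[of i] parity[of "Suc i"]
  by (simp add: power_cross_odd_swap_adj[OF i len] swap_sign_def)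

section \<open>Supersymmetric coordinate functions\<close>

lemma length_tuples: "xs \<in> tuples X d \<Longrightarrow> length xs = d"
  by (simp add: tuples_def)

lemma nth_mem_tuples: "xs \<in> tuples X d \<Longrightarrow> k < d \<Longrightarrow> xs ! k \<in> X"
  unfolding tuples_def using nth_mem by blast

lemma finite_tuples: "finite B \<Longrightarrow> finite (tuples B d)"
  unfolding tuples_def by (rule finite_lists_length_eq)

lemma finite_Seq: "finite (Ba \<union> Bc \<union> B1) \<Longrightarrow> finite (Seq Ba Bc B1 d)"
  by (rule finite_subset[OF _ finite_tuples]) (auto simp: Seq_def)

lemma two_le_count_mset_iff:
  "2 \<le> count (mset xs) x \<longleftrightarrow> (\<exists>k l. k < l \<and> l < length xs \<and> xs ! k = x \<and> xs ! l = x)"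
proof -
  define S where "S = {k. k < length xs \<and> xs ! k = x}"
  have "count (mset xs) x = card S"
    by (simp add: S_def count_mset count_list_eq_length_filter length_filter_conv_card eq_commute)
  moreover have "2 \<le> card S \<longleftrightarrow> \<not> card S \<le> Suc 0"
    by arith
  moreover have "\<dots> \<longleftrightarrow> (\<exists>k\<in>S. \<exists>l\<in>S. k \<noteq> l)"
    using card_le_Suc0_iff_eq[of S] by (simp add: S_def)
  moreover have "(\<exists>k\<in>S. \<exists>l\<in>S. k \<noteq> l) \<longleftrightarrow> (\<exists>k\<in>S. \<exists>l\<in>S. k < l)"
    by (metis less_imp_neq linorder_neqE_nat)
  moreover have "(\<exists>k\<in>S. \<exists>l\<in>S. k < l) \<longleftrightarrow> (\<exists>k l. k < l \<and> l < length xs \<and> xs ! k = x \<and> xs ! l = x)"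
    unfolding S_def using order.strict_trans by fastforce
  ultimately show ?thesis
    by (simp only:)
qed

lemma Seq_iff_count:
  assumes disjoint: "B1 \<inter> (Ba \<union> Bc) = {}"
  shows "bs \<in> Seq Ba Bc B1 d \<longleftrightarrow>
    bs \<in> tuples (Ba \<union> Bc \<union> B1) d \<and> (\<forall>x\<in>B1. count (mset bs) x \<le> 1)"
proof (cases "bs \<in> tuples (Ba \<union> Bc \<union> B1) d")
  case True
  then have len: "length bs = d" and set: "set bs \<subseteq> Ba \<union> Bc \<union> B1"
    by (simp_all add: tuples_def)
  have "(\<exists>k l. k < l \<and> l < d \<and> bs ! k = bs ! l \<and> bs ! k \<notin> Ba \<union> Bc) \<longleftrightarrow>
      (\<exists>x\<in>B1. 2 \<le> count (mset bs) x)"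
  proof
    assume "\<exists>k l. k < l \<and> l < d \<and> bs ! k = bs ! l \<and> bs ! k \<notin> Ba \<union> Bc"
    then obtain k l where kl: "k < l" "l < d" "bs ! k = bs ! l" "bs ! k \<notin> Ba \<union> Bc"
      by blast
    moreover have "bs ! k \<in> set bs"
      using kl len by simp
    ultimately have "bs ! k \<in> B1"
      using set by blast
    then show "\<exists>x\<in>B1. 2 \<le> count (mset bs) x"
      using kl len by (auto simp: two_le_count_mset_iff)
  next
    assume "\<exists>x\<in>B1. 2 \<le> count (mset bs) x"
    then obtain k l where "k < l" "l < d" "bs ! k = bs ! l" "bs ! k \<in> B1"
      using len by (auto simp: two_le_count_mset_iff)
    then show "\<exists>k l. k < l \<and> l < d \<and> bs ! k = bs ! l \<and> bs ! k \<notin> Ba \<union> Bc"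
      using disjoint by blast
  qed
  moreover have "bs \<in> Seq Ba Bc B1 d \<longleftrightarrow> bs \<in> tuples (Ba \<union> Bc \<union> B1) d \<and>
      \<not> (\<exists>k l. k < l \<and> l < d \<and> bs ! k = bs ! l \<and> bs ! k \<notin> Ba \<union> Bc)"
    unfolding Seq_def by blast
  moreover have "(\<forall>x\<in>B1. count (mset bs) x \<le> 1) \<longleftrightarrow> \<not> (\<exists>x\<in>B1. 2 \<le> count (mset bs) x)"
    by auto
  ultimately show ?thesis
    by (simp only:)
qed (simp add: Seq_def)

(* Membership in Gamma^d, tested on the adjacent transpositions generating the symmetric group. *)
definition supersymmetric :: "'a set \<Rightarrow> ('a list \<Rightarrow> 'r::comm_ring_1) \<Rightarrow> bool" where
  "supersymmetric Od f \<longleftrightarrow>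
     (\<forall>xs i. Suc i < length xs \<longrightarrow> f (swap_adj i xs) = swap_sign Od xs i * f xs)"

lemma supersymmetricD:
  "supersymmetric Od f \<Longrightarrow> Suc i < length xs \<Longrightarrow> f (swap_adj i xs) = swap_sign Od xs i * f xs"
  by (simp add: supersymmetric_def)

lemma nth_neq_nth_Suc_if_count_le_1:
  "\<forall>x\<in>Od. count (mset xs) x \<le> 1 \<Longrightarrow> Suc i < length xs \<Longrightarrow> xs ! i \<in> Od \<Longrightarrow> xs ! i \<noteq> xs ! Suc i"
  using two_le_count_mset_iff[of xs "xs ! i"] by fastforce

lemma x_vec_swap_adj:
  assumes odd_simple: "\<forall>x\<in>Od. count (mset bs) x \<le> 1" and i: "Suc i < length w"
  shows "x_vec Od bs (swap_adj i w) = swap_sign Od w i * x_vec Od bs w"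
proof (cases "mset w = mset bs")
  case True
  then have "\<forall>x\<in>Od. count (mset w) x \<le> 1"
    using odd_simple by simp
  note sign = power_odd_inv_swap_adj[OF i nth_neq_nth_Suc_if_count_le_1[OF this i]]
  show ?thesis
    using True i by (simp add: x_vec_def power_add sign mult.left_commute)
qed (use i in \<open>simp add: x_vec_def\<close>)

lemma supersymmetric_y_vec:
  "b \<in> Seq Ba Bc B1 d \<Longrightarrow> B1 \<inter> (Ba \<union> Bc) = {} \<Longrightarrow> supersymmetric B1 (y_vec Bc B1 b)"
  by (simp add: supersymmetric_def y_vec_def x_vec_swap_adj Seq_iff_count mult.left_commute)

lemma supersymmetric_sum:
  "(\<And>s. s \<in> S \<Longrightarrow> supersymmetric Od (g s)) \<Longrightarrow> supersymmetric Od (\<lambda>w. \<Sum>s\<in>S. c s * g s w)"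
  by (simp add: supersymmetric_def sum_distrib_left mult.left_commute)

lemma supersymmetric_Gamma_tilde:
  "f \<in> Gamma_tilde Ba Bc B1 d \<Longrightarrow> B1 \<inter> (Ba \<union> Bc) = {} \<Longrightarrow> supersymmetric B1 f"
  by (auto simp: Gamma_tilde_def intro!: supersymmetric_sum supersymmetric_y_vec)

lemma supersymmetric_sort:
  assumes f: "supersymmetric Od (f :: 'a::linorder list \<Rightarrow> 'r::comm_ring_1)"
    and "\<forall>x\<in>Od. count (mset w) x \<le> 1"
  shows "(-1) ^ odd_inv Od (sort w) * f (sort w) = (-1) ^ odd_inv Od w * f w"
proof (rule swap_adj_invariant_sort[where Q = "\<lambda>M. \<forall>x\<in>Od. count M x \<le> 1"])
  fix z :: "'a list" and i
  assume "\<forall>x\<in>Od. count (mset z) x \<le> 1" and i: "Suc i < length z"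
  then have "(-1 :: 'r) ^ odd_inv Od (swap_adj i z) = swap_sign Od z i * (-1) ^ odd_inv Od z"
    by (intro power_odd_inv_swap_adj nth_neq_nth_Suc_if_count_le_1)
  then show "(-1) ^ odd_inv Od (swap_adj i z) * f (swap_adj i z) = (-1) ^ odd_inv Od z * f z"
    using supersymmetricD[OF f i] by (simp add: mult_ac)
qed (use assms in simp)

lemma supersymmetric_eq_0_if_odd_repeated:
  fixes f :: "'a::linorder list \<Rightarrow> 'r::{idom, ring_char_0}"
  assumes f: "supersymmetric Od f" and "x \<in> Od" and "2 \<le> count (mset w) x"
  shows "f w = 0"
proof -
  let ?s = "sort w"
  have "(f ?s = 0) = (f w = 0)"
    by (rule swap_adj_invariant_sort[where Q = "\<lambda>_. True"])
      (simp_all add: supersymmetricD[OF f] swap_sign_def)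
  moreover obtain k l where kl: "k < l" "l < length ?s" "?s ! k = x" "?s ! l = x"
    using assms(3) two_le_count_mset_iff[of ?s x] by auto
  then have "?s ! k \<le> ?s ! Suc k" "?s ! Suc k \<le> ?s ! l"
    by (intro sorted_nth_mono sorted_sort; simp)+
  then have "?s ! k = ?s ! Suc k"
    using kl by simp
  then have "f ?s = - f ?s"
    using supersymmetricD[OF f, of k ?s] swap_adj_same[of k ?s] kl assms(2)
    by (simp add: swap_sign_def)
  ultimately show ?thesis
    by (simp add: eq_neg_iff_add_eq_0)
qed

lemma sum_sorted_y_vec:
  assumes "finite (Ba \<union> Bc \<union> B1)"
  shows "(\<Sum>s\<in>Seq Ba Bc B1 d. (if sorted s then c s else 0) * y_vec Bc B1 s w) =
    (if sort w \<in> Seq Ba Bc B1 d then c (sort w) * y_vec Bc B1 (sort w) w else 0)"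
proof -
  have "(if sorted s then c s else 0) * y_vec Bc B1 s w =
      (if s = sort w then c s * y_vec Bc B1 s w else 0)" for s
  proof (cases "sorted s \<and> mset w = mset s")
    case True
    then have "s = sort w"
      using properties_for_sort[of s w] by simp
    then show ?thesis
      by simp
  next
    case False
    moreover have "s \<noteq> sort w"
      using False by auto
    ultimately show ?thesis
      by (auto simp: y_vec_def x_vec_def)
  qed
  then show ?thesis
    using assms by (simp add: finite_Seq)
qed

lemma Gamma_tildeI:
  fixes f :: "'b::linorder list \<Rightarrow> 'r::{idom, ring_char_0}"
  assumes fin: "finite (Ba \<union> Bc \<union> B1)" and disjoint: "B1 \<inter> (Ba \<union> Bc) = {}"
    and support: "\<And>w. w \<notin> tuples (Ba \<union> Bc \<union> B1) d \<Longrightarrow> f w = 0"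
    and f: "supersymmetric B1 f"
    and dvd: "\<And>w. w \<in> Seq Ba Bc B1 d \<Longrightarrow> sorted w \<Longrightarrow> of_nat (fact_c Bc w) dvd f w"
  shows "f \<in> Gamma_tilde Ba Bc B1 d"
proof -
  obtain c where c: "\<And>s. s \<in> Seq Ba Bc B1 d \<Longrightarrow> sorted s \<Longrightarrow> f s = of_nat (fact_c Bc s) * c s"
    using dvd unfolding dvd_def by metis
  have "f w = (\<Sum>s\<in>Seq Ba Bc B1 d. (if sorted s then c s else 0) * y_vec Bc B1 s w)" for w
  proof (cases "sort w \<in> Seq Ba Bc B1 d")
    case True
    then have "\<forall>x\<in>B1. count (mset w) x \<le> 1"
      using disjoint by (simp add: Seq_iff_count)
    then have "(-1) ^ odd_inv B1 (sort w) * f (sort w) = (-1) ^ odd_inv B1 w * f w"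
      by (rule supersymmetric_sort[OF f])
    moreover have "c (sort w) * y_vec Bc B1 (sort w) w =
        (-1) ^ odd_inv B1 w * ((-1) ^ odd_inv B1 (sort w) * f (sort w))"
      using c[OF True sorted_sort] by (simp add: y_vec_def x_vec_def power_add mult_ac)
    ultimately have "c (sort w) * y_vec Bc B1 (sort w) w = f w"
      by simp
    then show ?thesis
      using True by (simp add: sum_sorted_y_vec[OF fin])
  next
    case False
    have "f w = 0"
    proof (cases "w \<in> tuples (Ba \<union> Bc \<union> B1) d")
      case True
      with False obtain x where "x \<in> B1" "2 \<le> count (mset w) x"
        using disjoint by (auto simp: Seq_iff_count tuples_def)
      then show ?thesis
        using f by (intro supersymmetric_eq_0_if_odd_repeated)
    qed (use support in blast)
    then show ?thesis
      using False by (simp add: sum_sorted_y_vec[OF fin])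
  qed
  then have "f = (\<lambda>w. \<Sum>s\<in>Seq Ba Bc B1 d. (if sorted s then c s else 0) * y_vec Bc B1 s w)"
    by (rule ext)
  then show ?thesis
    unfolding Gamma_tilde_def by (intro CollectI exI)
qed

section \<open>The action of the tensor power preserves supersymmetry\<close>

lemma sum_tuples_swap_adj:
  "Suc i < d \<Longrightarrow> (\<Sum>xs\<in>tuples X d. g xs) = (\<Sum>xs\<in>tuples X d. g (swap_adj i xs))"
  by (rule sum.reindex_bij_witness[of _ "swap_adj i" "swap_adj i"]) (auto simp: tuples_def)

lemma prod_nth_swap_adj:
  assumes i: "Suc i < d" and "length as = d" "length vs = d" "length w = d"
  shows "(\<Prod>k<d. h (swap_adj i as ! k) (swap_adj i vs ! k) (swap_adj i w ! k)) =
    (\<Prod>k<d. h (as ! k) (vs ! k) (w ! k))"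
proof -
  let ?t = "transpose i (Suc i)"
  have "(\<Prod>k<d. h (swap_adj i as ! k) (swap_adj i vs ! k) (swap_adj i w ! k)) =
      (\<Prod>k<d. h (as ! ?t k) (vs ! ?t k) (w ! ?t k))"
    using assms by (intro prod.cong) (auto simp: nth_swap_adj)
  also have "\<dots> = (\<Prod>k<d. h (as ! k) (vs ! k) (w ! k))"
    using prod.permute[OF transpose_Suc_permutes[OF i], of "\<lambda>k. h (as ! k) (vs ! k) (w ! k)"]
    by (simp add: comp_def)
  finally show ?thesis .
qed

lemma prod_lessThan_nonzeroD:
  assumes "(\<Prod>k<d. f k) \<noteq> (0 :: 'a::comm_semiring_1)" and "k < (d :: nat)"
  shows "f k \<noteq> 0"
proof
  assume "f k = 0"
  then have "(\<Prod>k<d. f k) = 0"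
    using assms(2) by (intro prod_zero) auto
  with assms(1) show False
    by simp
qed

lemma tensor_summand_swap_adj:
  assumes i: "Suc i < d" and as: "as \<in> tuples C d" and vs: "vs \<in> tuples B d" and lw: "length w = d"
    and parity: "\<And>x v u. x \<in> C \<Longrightarrow> v \<in> B \<Longrightarrow> act x v u \<noteq> 0 \<Longrightarrow>
      (u \<in> B1) = ((x \<in> C1) \<noteq> (v \<in> B1))"
    and eta: "supersymmetric C1 eta" and y: "supersymmetric B1 y"
  shows "eta (swap_adj i as) * y (swap_adj i vs) * (-1) ^ cross_odd C1 B1 (swap_adj i as) (swap_adj i vs) *
      (\<Prod>k<d. act (swap_adj i as ! k) (swap_adj i vs ! k) (swap_adj i w ! k)) =
    swap_sign B1 w i * (eta as * y vs * (-1) ^ cross_odd C1 B1 as vs * (\<Prod>k<d. act (as ! k) (vs ! k) (w ! k)))"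
proof (cases "(\<Prod>k<d. act (as ! k) (vs ! k) (w ! k)) = 0")
  case True
  then show ?thesis
    using prod_nth_swap_adj[OF i length_tuples[OF as] length_tuples[OF vs] lw, of act] by simp
next
  case False
  have "act (as ! k) (vs ! k) (w ! k) \<noteq> 0" if "k < d" for k
    using False that by (rule prod_lessThan_nonzeroD)
  then have parity_k: "(w ! k \<in> B1) = ((as ! k \<in> C1) \<noteq> (vs ! k \<in> B1))" if "k < d" for k
    using parity nth_mem_tuples[OF as that] nth_mem_tuples[OF vs that] that by blast
  have parity_i: "k \<in> {i, Suc i} \<Longrightarrow> (w ! k \<in> B1) = ((as ! k \<in> C1) \<noteq> (vs ! k \<in> B1))" for k
    using i parity_k by auto
  have lens: "Suc i < length as" "Suc i < length vs" "length vs = length as"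
    using i length_tuples[OF as] length_tuples[OF vs] by simp_all
  have "eta (swap_adj i as) * y (swap_adj i vs) * (-1) ^ cross_odd C1 B1 (swap_adj i as) (swap_adj i vs) *
      (\<Prod>k<d. act (swap_adj i as ! k) (swap_adj i vs ! k) (swap_adj i w ! k)) =
    (swap_sign C1 as i * eta as) * (swap_sign B1 vs i * y vs) *
      (swap_sign C1 as i * swap_sign B1 vs i * swap_sign B1 w i * (-1) ^ cross_odd C1 B1 as vs) *
      (\<Prod>k<d. act (as ! k) (vs ! k) (w ! k))"
    by (simp only: supersymmetricD[OF eta lens(1)] supersymmetricD[OF y lens(2)]
        power_cross_odd_swap_adj_parity[OF lens(1,3) parity_i]
        prod_nth_swap_adj[OF i length_tuples[OF as] length_tuples[OF vs] lw])
  then show ?thesis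
    by (simp add: swap_sign_def)
qed

lemma supersymmetric_tensor_act:
  assumes parity: "\<And>x v u. x \<in> Ca \<union> Cc \<union> C1 \<Longrightarrow> v \<in> Ba \<union> Bc \<union> B1 \<Longrightarrow> act x v u \<noteq> 0 \<Longrightarrow>
      (u \<in> B1) = ((x \<in> C1) \<noteq> (v \<in> B1))"
    and eta: "supersymmetric C1 eta" and y: "supersymmetric B1 y"
  shows "supersymmetric B1 (tensor_act Ca Cc C1 Ba Bc B1 act d eta y)"
  unfolding supersymmetric_def
proof (intro allI impI)
  fix w :: "'b list" and i
  assume i: "Suc i < length w"
  let ?C = "Ca \<union> Cc \<union> C1" and ?B = "Ba \<union> Bc \<union> B1"
  show "tensor_act Ca Cc C1 Ba Bc B1 act d eta y (swap_adj i w) =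
      swap_sign B1 w i * tensor_act Ca Cc C1 Ba Bc B1 act d eta y w"
  proof (cases "w \<in> tuples ?B d")
    case True
    then have id: "Suc i < d" and lw: "length w = d"
      using i by (auto simp: tuples_def)
    have "tensor_act Ca Cc C1 Ba Bc B1 act d eta y (swap_adj i w) =
        (\<Sum>as\<in>tuples ?C d. \<Sum>vs\<in>tuples ?B d. eta as * y vs * (-1) ^ cross_odd C1 B1 as vs *
          (\<Prod>k<d. act (as ! k) (vs ! k) (swap_adj i w ! k)))"
      using True i by (simp add: tensor_act_def tuples_def)
    also have "\<dots> = (\<Sum>as\<in>tuples ?C d. \<Sum>vs\<in>tuples ?B d. eta (swap_adj i as) * y (swap_adj i vs) *
          (-1) ^ cross_odd C1 B1 (swap_adj i as) (swap_adj i vs) *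
          (\<Prod>k<d. act (swap_adj i as ! k) (swap_adj i vs ! k) (swap_adj i w ! k)))"
      by (subst sum_tuples_swap_adj[OF id], rule sum.cong[OF refl], subst sum_tuples_swap_adj[OF id], rule refl)
    also have "\<dots> = (\<Sum>as\<in>tuples ?C d. \<Sum>vs\<in>tuples ?B d. swap_sign B1 w i *
          (eta as * y vs * (-1) ^ cross_odd C1 B1 as vs * (\<Prod>k<d. act (as ! k) (vs ! k) (w ! k))))"
      by (intro sum.cong refl tensor_summand_swap_adj[OF id _ _ lw parity eta y])
    also have "\<dots> = swap_sign B1 w i * tensor_act Ca Cc C1 Ba Bc B1 act d eta y w"
      using True by (simp add: tensor_act_def sum_distrib_left)
    finally show ?thesis .
  next
    case False
    moreover have "swap_adj i w \<notin> tuples ?B d"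
      using False i by (simp add: tuples_def)
    ultimately show ?thesis
      by (simp add: tensor_act_def)
  qed
qed

section \<open>Multiset factorials\<close>

definition mset_fact_on :: "'a set \<Rightarrow> 'a multiset \<Rightarrow> nat" where
  "mset_fact_on X M = (\<Prod>x\<in>X. fact (count M x))"

abbreviation mset_fact :: "'a multiset \<Rightarrow> nat" where
  "mset_fact M \<equiv> mset_fact_on (set_mset M) M"

lemma mset_fact_on_superset:
  "finite X \<Longrightarrow> set_mset M \<subseteq> X \<Longrightarrow> mset_fact_on X M = mset_fact M"
  unfolding mset_fact_on_def by (rule prod.mono_neutral_right) (auto simp: not_in_iff)

lemma fact_c_eq_mset_fact_on: "fact_c X bs = mset_fact_on X (mset bs)"
  by (simp add: fact_c_def mset_fact_on_def)

lemma mset_fact_split: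
  assumes "finite X"
  shows "mset_fact M = mset_fact_on X M * mset_fact_on (set_mset M - X) M"
proof -
  have "mset_fact M = mset_fact_on (X \<union> (set_mset M - X)) M"
    using assms by (intro mset_fact_on_superset[symmetric]) auto
  also have "\<dots> = mset_fact_on X M * mset_fact_on (set_mset M - X) M"
    unfolding mset_fact_on_def using assms by (intro prod.union_disjoint) auto
  finally show ?thesis .
qed

lemma mset_fact_remove:
  assumes "x \<in># M"
  shows "mset_fact M = count M x * mset_fact (M - {#x#})"
proof -
  let ?R = "\<Prod>y\<in>set_mset M - {x}. fact (count M y)"
  have "mset_fact M = fact (count M x) * ?R"
    using assms by (simp add: mset_fact_on_def prod.remove)
  moreover have "mset_fact (M - {#x#}) = fact (count M x - 1) * ?R"
  proof -
    have "mset_fact (M - {#x#}) = mset_fact_on (set_mset M) (M - {#x#})"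
      by (rule mset_fact_on_superset[symmetric]) (auto dest: in_diffD)
    also have "\<dots> = fact (count M x - 1) * (\<Prod>y\<in>set_mset M - {x}. fact (count (M - {#x#}) y))"
      using assms by (simp add: mset_fact_on_def prod.remove)
    also have "(\<Prod>y\<in>set_mset M - {x}. fact (count (M - {#x#}) y)) = ?R"
      by (rule prod.cong) auto
    finally show ?thesis .
  qed
  moreover have "fact (count M x) = count M x * (fact (count M x - 1) :: nat)"
    using assms by (simp add: fact_reduce)
  ultimately show ?thesis
    by simp
qed

lemma count_le_count_image_mset: "count M t \<le> count (image_mset f M) (f t)"
  by (cases "t \<in># M") (auto simp: count_image_mset not_in_iff intro!: member_le_sum)

lemma card_lifts_Cons:
  "card {z \<in> permutations_of_multiset M. map g z = u # w} =
    (\<Sum>t\<in>{t \<in> set_mset M. g t = u}. card {z \<in> permutations_of_multiset (M - {#t#}). map g z = w})"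
proof -
  let ?L = "\<lambda>t. {z \<in> permutations_of_multiset (M - {#t#}). map g z = w}"
  have "{z \<in> permutations_of_multiset M. map g z = u # w} = (\<Union>t\<in>{t \<in> set_mset M. g t = u}. (#) t ` ?L t)"
    by (auto simp: Cons_eq_map_conv permutations_of_multiset_Cons_iff)
  also have "card \<dots> = (\<Sum>t\<in>{t \<in> set_mset M. g t = u}. card ((#) t ` ?L t))"
    by (rule card_UN_disjoint) auto
  also have "\<dots> = (\<Sum>t\<in>{t \<in> set_mset M. g t = u}. card (?L t))"
    by (intro sum.cong refl card_image) (simp add: inj_on_def)
  finally show ?thesis .
qed

lemma card_lifts_mult_mset_fact:
  "image_mset g M = mset w \<Longrightarrow>
    card {z \<in> permutations_of_multiset M. map g z = w} * mset_fact M = mset_fact (mset w)"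
proof (induction w arbitrary: M)
  case Nil
  then show ?case
    by (simp add: mset_fact_on_def)
next
  case (Cons u w)
  let ?T = "{t \<in> set_mset M. g t = u}"
  have "card {z \<in> permutations_of_multiset M. map g z = u # w} * mset_fact M =
      (\<Sum>t\<in>?T. card {z \<in> permutations_of_multiset (M - {#t#}). map g z = w} * mset_fact M)"
    by (simp add: card_lifts_Cons sum_distrib_right)
  also have "\<dots> = (\<Sum>t\<in>?T. count M t * mset_fact (mset w))"
  proof (rule sum.cong)
    fix t assume "t \<in> ?T"
    then show "card {z \<in> permutations_of_multiset (M - {#t#}). map g z = w} * mset_fact M =
        count M t * mset_fact (mset w)"
      using Cons.IH[of "M - {#t#}"] Cons.prems mset_fact_remove[of t M]
      by (simp add: image_mset_Diff mult_ac)
  qed simp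
  also have "\<dots> = count (image_mset g M) u * mset_fact (mset w)"
    by (simp add: count_image_mset Int_def conj_commute sum_distrib_right)
  also have "\<dots> = mset_fact (mset (u # w))"
    using Cons.prems mset_fact_remove[of u "mset (u # w)"] by simp
  finally show ?case .
qed

lemma prod_fact_dvd_fact_sum:
  "finite S \<Longrightarrow> (\<Prod>t\<in>S. fact (f t)) dvd (fact (\<Sum>t\<in>S. f t) :: nat)"
proof (induction S rule: finite_induct)
  case (insert x S)
  then have "(\<Prod>t\<in>insert x S. fact (f t)) dvd fact (f x) * (fact (\<Sum>t\<in>S. f t) :: nat)"
    by (simp add: mult_dvd_mono)
  also have "\<dots> dvd fact (f x + (\<Sum>t\<in>S. f t))"
    by (rule fact_fact_dvd_fact)
  finally show ?case
    using insert by simp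
qed simp

lemma prod_fact_count_dvd_image:
  assumes Y: "finite Y" and "g ` S \<subseteq> Y" and S: "S \<subseteq> set_mset M"
  shows "(\<Prod>t\<in>S. fact (count M t)) dvd mset_fact_on Y (image_mset g M)"
proof -
  have fin: "finite S"
    using S finite_subset by blast
  have "(\<Prod>t\<in>S. fact (count M t)) = (\<Prod>y\<in>Y. \<Prod>t\<in>{t \<in> S. g t = y}. fact (count M t))"
    by (rule prod.group[OF fin Y assms(2), symmetric])
  also have "\<dots> dvd mset_fact_on Y (image_mset g M)"
    unfolding mset_fact_on_def
  proof (rule prod_dvd_prod)
    fix y
    have "(\<Sum>t\<in>{t \<in> S. g t = y}. count M t) \<le> (\<Sum>t\<in>g -` {y} \<inter> set_mset M. count M t)"
      using S by (intro sum_mono2) auto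
    then have le: "(\<Sum>t\<in>{t \<in> S. g t = y}. count M t) \<le> count (image_mset g M) y"
      by (simp add: count_image_mset)
    have "(\<Prod>t\<in>{t \<in> S. g t = y}. fact (count M t)) dvd (fact (\<Sum>t\<in>{t \<in> S. g t = y}. count M t) :: nat)"
      by (rule prod_fact_dvd_fact_sum) (use fin in simp)
    also have "\<dots> dvd fact (count (image_mset g M) y)"
      using le by (rule fact_dvd)
    finally show "(\<Prod>t\<in>{t \<in> S. g t = y}. fact (count M t)) dvd (fact (count (image_mset g M) y) :: nat)" .
  qed
  finally show ?thesis .
qed

lemma mset_fact_dvd_triples:
  fixes M :: "('c \<times> 'b \<times> 'b) multiset"
  defines "W \<equiv> image_mset (snd \<circ> snd) M"
  assumes Cc: "finite Cc" and Bc: "finite Bc"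
    and repeated: "\<And>x v u. (x, v, u) \<in># M \<Longrightarrow> u \<in> Bc \<Longrightarrow> x \<notin> Cc \<Longrightarrow> v \<notin> Bc \<Longrightarrow>
      count M (x, v, u) = 1"
  shows "mset_fact M dvd mset_fact_on Cc (image_mset fst M) * mset_fact_on Bc (image_mset (fst \<circ> snd) M) *
    mset_fact_on (set_mset W - Bc) W"
proof -
  let ?h = "\<lambda>t. fact (count M t) :: nat"
  define S1 where "S1 = set_mset M \<inter> {t. snd (snd t) \<in> Bc}"
  define S2 where "S2 = S1 - {t. fst t \<in> Cc}"
  define S3 where "S3 = S2 - {t. fst (snd t) \<in> Bc}"
  have "mset_fact M = prod ?h S1 * prod ?h (set_mset M - {t. snd (snd t) \<in> Bc})"
    unfolding mset_fact_on_def S1_def by (rule prod.Int_Diff) simp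
  moreover have "prod ?h S1 = prod ?h (S1 \<inter> {t. fst t \<in> Cc}) * prod ?h S2"
    unfolding S2_def by (rule prod.Int_Diff) (simp add: S1_def)
  moreover have "prod ?h S2 = prod ?h (S2 \<inter> {t. fst (snd t) \<in> Bc}) * prod ?h S3"
    unfolding S3_def by (rule prod.Int_Diff) (simp add: S2_def S1_def)
  moreover have "prod ?h S3 = 1"
  proof (rule prod.neutral, clarify)
    fix x v u assume "(x, v, u) \<in> S3"
    then show "fact (count M (x, v, u)) = 1"
      using repeated[of x v u] by (simp add: S3_def S2_def S1_def)
  qed
  ultimately have "mset_fact M = prod ?h (S1 \<inter> {t. fst t \<in> Cc}) *
      prod ?h (S2 \<inter> {t. fst (snd t) \<in> Bc}) * prod ?h (set_mset M - {t. snd (snd t) \<in> Bc})"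
    by simp
  also have "\<dots> dvd mset_fact_on Cc (image_mset fst M) * mset_fact_on Bc (image_mset (fst \<circ> snd) M) *
      mset_fact_on (set_mset W - Bc) W"
  proof (intro mult_dvd_mono)
    show "prod ?h (S1 \<inter> {t. fst t \<in> Cc}) dvd mset_fact_on Cc (image_mset fst M)"
      using Cc by (rule prod_fact_count_dvd_image) (auto simp: S1_def)
    show "prod ?h (S2 \<inter> {t. fst (snd t) \<in> Bc}) dvd mset_fact_on Bc (image_mset (fst \<circ> snd) M)"
      using Bc by (rule prod_fact_count_dvd_image) (auto simp: S2_def S1_def)
    show "prod ?h (set_mset M - {t. snd (snd t) \<in> Bc}) dvd mset_fact_on (set_mset W - Bc) W"
      unfolding W_def by (rule prod_fact_count_dvd_image) auto
  qed
  finally show ?thesis .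
qed

lemma dvd_mult_if_mult_eq_mult:
  fixes N m f r a :: nat
  assumes "N * m = f * r" and "m dvd a * r" and "r \<noteq> 0"
  shows "f dvd a * N"
proof -
  obtain q where "a * r = m * q"
    using assms(2) by blast
  then have "(a * N) * r = (f * q) * r"
    using assms(1) by (simp add: mult_ac)
  then show ?thesis
    using assms(3) by simp
qed

section \<open>Koszul signs of lists of triples\<close>

definition koszul_sign :: "'c::linorder set \<Rightarrow> 'b::linorder set \<Rightarrow> ('c \<times> 'b \<times> 'b) list \<Rightarrow> 'r::comm_ring_1" where
  "koszul_sign C1 B1 z = (-1) ^ (odd_inv C1 (map fst z) + odd_inv B1 (map (fst \<circ> snd) z) +
     cross_odd C1 B1 (map fst z) (map (fst \<circ> snd) z) + odd_inv B1 (map (snd \<circ> snd) z))"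

(* Satisfied by the triples (as_k, vs_k, w_k) of each nonzero term of y_a y_b at w. *)
definition koszul_admissible :: "'c set \<Rightarrow> 'b set \<Rightarrow> ('c \<times> 'b \<times> 'b) multiset \<Rightarrow> bool" where
  "koszul_admissible C1 B1 M \<longleftrightarrow>
     (\<forall>(x, v, u)\<in>#M. (u \<in> B1) = ((x \<in> C1) \<noteq> (v \<in> B1))) \<and>
     (\<forall>x\<in>C1. count (image_mset fst M) x \<le> 1) \<and>
     (\<forall>v\<in>B1. count (image_mset (fst \<circ> snd) M) v \<le> 1) \<and>
     (\<forall>u\<in>B1. count (image_mset (snd \<circ> snd) M) u \<le> 1)"

lemma koszul_sign_swap_adj:
  assumes adm: "koszul_admissible C1 B1 (mset z)" and i: "Suc i < length z"
  shows "(koszul_sign C1 B1 (swap_adj i z) :: 'r::comm_ring_1) = koszul_sign C1 B1 z"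
proof -
  define as where "as = map fst z"
  define vs where "vs = map (fst \<circ> snd) z"
  define ws where "ws = map (snd \<circ> snd) z"
  have lens: "Suc i < length as" "Suc i < length vs" "Suc i < length ws" "length vs = length as"
    using i by (simp_all add: as_def vs_def ws_def)
  have simple: "\<forall>x\<in>C1. count (mset as) x \<le> 1" "\<forall>x\<in>B1. count (mset vs) x \<le> 1"
    "\<forall>x\<in>B1. count (mset ws) x \<le> 1"
    using adm by (simp_all add: koszul_admissible_def as_def vs_def ws_def flip: mset_map)
  have "(ws ! k \<in> B1) = ((as ! k \<in> C1) \<noteq> (vs ! k \<in> B1))" if "k \<in> {i, Suc i}" for k
  proof -
    have "z ! k \<in># mset z"
      using that i by auto
    then show ?thesis
      using adm that i by (auto simp: koszul_admissible_def as_def vs_def ws_def)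
  qed
  note cross = power_cross_odd_swap_adj_parity[OF lens(1,4) this]
  have "(koszul_sign C1 B1 (swap_adj i z) :: 'r) = (-1) ^ odd_inv C1 (swap_adj i as) * (-1) ^ odd_inv B1 (swap_adj i vs) *
      (-1) ^ cross_odd C1 B1 (swap_adj i as) (swap_adj i vs) * (-1) ^ odd_inv B1 (swap_adj i ws)"
    using i by (simp add: koszul_sign_def power_add map_swap_adj as_def vs_def ws_def)
  also have "\<dots> = (swap_sign C1 as i * (-1) ^ odd_inv C1 as) * (swap_sign B1 vs i * (-1) ^ odd_inv B1 vs) *
      (swap_sign C1 as i * swap_sign B1 vs i * swap_sign B1 ws i * (-1) ^ cross_odd C1 B1 as vs) *
      (swap_sign B1 ws i * (-1) ^ odd_inv B1 ws)"
    by (simp only: cross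
        power_odd_inv_swap_adj[OF lens(1) nth_neq_nth_Suc_if_count_le_1[OF simple(1) lens(1)]]
        power_odd_inv_swap_adj[OF lens(2) nth_neq_nth_Suc_if_count_le_1[OF simple(2) lens(2)]]
        power_odd_inv_swap_adj[OF lens(3) nth_neq_nth_Suc_if_count_le_1[OF simple(3) lens(3)]])
  also have "\<dots> = koszul_sign C1 B1 z"
    by (simp add: koszul_sign_def power_add swap_sign_def as_def vs_def ws_def)
  finally show ?thesis .
qed

lemma koszul_sign_sort:
  "koszul_admissible C1 B1 (mset z) \<Longrightarrow> (koszul_sign C1 B1 (sort z) :: 'r::comm_ring_1) = koszul_sign C1 B1 z"
  by (rule swap_adj_invariant_sort[where Q = "koszul_admissible C1 B1"]) (auto simp: koszul_sign_swap_adj)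

lemma koszul_sign_mset_eq:
  assumes "koszul_admissible C1 B1 (mset z)" and "mset z' = mset z"
  shows "(koszul_sign C1 B1 z' :: 'r::comm_ring_1) = koszul_sign C1 B1 z"
proof -
  have "sort z' = sort z"
    using assms(2) by (metis properties_for_sort mset_sort sorted_sort)
  have "(koszul_sign C1 B1 z' :: 'r) = koszul_sign C1 B1 (sort z')"
    using assms by (simp add: koszul_sign_sort)
  also have "\<dots> = koszul_sign C1 B1 z"
    using \<open>sort z' = sort z\<close> assms(1) by (simp add: koszul_sign_sort)
  finally show ?thesis .
qed

section \<open>Products of two basis vectors\<close>

lemma dvd_sum_if_fibrewise_constant:
  fixes F :: "'a \<Rightarrow> 'r::comm_ring_1"
  assumes "finite P"
    and fibre: "\<And>p q. p \<in> P \<Longrightarrow> q \<in> P \<Longrightarrow> \<kappa> p = \<kappa> q \<Longrightarrow> F p = F q"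
    and dvd: "\<And>p. p \<in> P \<Longrightarrow> F p \<noteq> 0 \<Longrightarrow> m dvd of_nat (card {q \<in> P. \<kappa> q = \<kappa> p}) * F p"
  shows "m dvd (\<Sum>p\<in>P. F p)"
proof -
  have "(\<Sum>p\<in>P. F p) = (\<Sum>K\<in>\<kappa> ` P. \<Sum>p\<in>{p \<in> P. \<kappa> p = K}. F p)"
    by (rule sum.image_gen[OF assms(1)])
  also have "m dvd \<dots>"
  proof (rule dvd_sum)
    fix K assume "K \<in> \<kappa> ` P"
    then obtain p where p: "p \<in> P" "K = \<kappa> p"
      by blast
    have "F q = F p" if "q \<in> {q \<in> P. \<kappa> q = \<kappa> p}" for q
      using fibre[of q p] that p(1) by simp
    then have "(\<Sum>q\<in>{q \<in> P. \<kappa> q = K}. F q) = (\<Sum>q\<in>{q \<in> P. \<kappa> q = \<kappa> p}. F p)"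
      unfolding p(2) by (rule sum.cong[OF refl])
    also have "\<dots> = of_nat (card {q \<in> P. \<kappa> q = \<kappa> p}) * F p"
      by simp
    finally have "(\<Sum>q\<in>{q \<in> P. \<kappa> q = K}. F q) = of_nat (card {q \<in> P. \<kappa> q = \<kappa> p}) * F p" .
    then show "m dvd (\<Sum>q\<in>{q \<in> P. \<kappa> q = K}. F q)"
      using dvd[OF p(1)] by (cases "F p = 0") simp_all
  qed
  finally show ?thesis .
qed

lemma of_nat_dvd_of_nat_mult_mult:
  "m dvd k * n \<Longrightarrow> (of_nat m :: 'a::comm_semiring_1) dvd of_nat n * (of_nat k * x)"
proof -
  assume "m dvd k * n"
  then obtain q where "k * n = m * q"
    by (elim dvdE)
  have "(of_nat n * (of_nat k * x) :: 'a) = of_nat (k * n) * x"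
    by (simp add: mult_ac)
  also have "\<dots> = of_nat m * (of_nat q * x)"
    using \<open>k * n = m * q\<close> by (simp add: mult_ac)
  finally show ?thesis
    by simp
qed

lemma map_zip_triples:
  assumes "length as = length w" and "length vs = length w"
  shows "map fst (zip as (zip vs w)) = as" "map (fst \<circ> snd) (zip as (zip vs w)) = vs"
    "map (snd \<circ> snd) (zip as (zip vs w)) = w"
  using assms by (simp_all add: list_eq_iff_nth_eq)

lemma zip_map_triples: "zip (map fst z) (zip (map (fst \<circ> snd) z) (map (snd \<circ> snd) z)) = z"
  by (induction z) auto

lemma card_fibre_eq_card_lifts:
  fixes w :: "'u list"
  assumes lw: "length w = d" and M: "set_mset M \<subseteq> C \<times> B \<times> UNIV"
  shows "card {p \<in> tuples C d \<times> tuples B d. mset (zip (fst p) (zip (snd p) w)) = M} =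
    card {z \<in> permutations_of_multiset M. map (snd \<circ> snd) z = w}"
    (is "card ?F = card ?L")
proof (rule bij_betw_same_card[of "\<lambda>p. zip (fst p) (zip (snd p) w)"])
  have maps: "map fst (zip (fst p) (zip (snd p) w)) = fst p"
    "map (fst \<circ> snd) (zip (fst p) (zip (snd p) w)) = snd p"
    "map (snd \<circ> snd) (zip (fst p) (zip (snd p) w)) = w" if "p \<in> ?F" for p
    using that lw by (auto intro!: map_zip_triples simp: length_tuples)
  have inv: "zip (map fst z) (zip (map (fst \<circ> snd) z) w) = z" if "z \<in> ?L" for z
    using that zip_map_triples[of z] by simp
  have "(map fst z, map (fst \<circ> snd) z) \<in> ?F" if z: "z \<in> ?L" for z
  proof -
    have "set z \<subseteq> C \<times> B \<times> UNIV"
      using z M by (auto simp: permutations_of_multiset_def)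
    then show ?thesis
      using z lw inv[OF z] by (auto simp: tuples_def permutations_of_multiset_def)
  qed
  then show "bij_betw (\<lambda>p. zip (fst p) (zip (snd p) w)) ?F ?L"
    using maps inv
    by (intro bij_betw_byWitness[where f' = "\<lambda>z. (map fst z, map (fst \<circ> snd) z)"])
      (auto simp: permutations_of_multiset_def)
qed

lemma prod_mset_image_mset_mset: "prod_mset (image_mset f (mset xs)) = (\<Prod>k<length xs. f (xs ! k))"
  by (induction xs) (simp_all add: prod.lessThan_Suc_shift del: prod.lessThan_Suc)

context
  fixes Ca Cc C1 :: "'c::linorder set" and Ba Bc B1 :: "'b::linorder set"
    and act :: "'c \<Rightarrow> 'b \<Rightarrow> 'b \<Rightarrow> 'r::comm_ring_1"
    and d :: nat and a :: "'c list" and b w :: "'b list"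
  assumes finite_C: "finite (Ca \<union> Cc \<union> C1)" and finite_B: "finite (Ba \<union> Bc \<union> B1)"
    and disjoint_C: "C1 \<inter> (Ca \<union> Cc) = {}" and disjoint_B: "B1 \<inter> (Ba \<union> Bc) = {}"
    and disjoint_ac: "Ba \<inter> Bc = {}"
    and parity: "\<And>x v u. x \<in> Ca \<union> Cc \<union> C1 \<Longrightarrow> v \<in> Ba \<union> Bc \<union> B1 \<Longrightarrow> act x v u \<noteq> 0 \<Longrightarrow>
      (u \<in> B1) = ((x \<in> C1) \<noteq> (v \<in> B1))"
    and closed: "\<And>x v u. x \<in> Ca \<Longrightarrow> v \<in> Ba \<Longrightarrow> act x v u \<noteq> 0 \<Longrightarrow> u \<in> Ba"
    and a: "a \<in> Seq Ca Cc C1 d" and b: "b \<in> Seq Ba Bc B1 d" and w: "w \<in> Seq Ba Bc B1 d"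
begin

definition coefficient_term :: "'c list \<Rightarrow> 'b list \<Rightarrow> 'r" where
  "coefficient_term as vs =
     x_vec C1 a as * x_vec B1 b vs * (-1) ^ cross_odd C1 B1 as vs * (\<Prod>k<d. act (as ! k) (vs ! k) (w ! k))"

lemma length_w: "length w = d"
  using w by (simp add: Seq_def tuples_def)

lemma tensor_act_y_vec_eq_sum:
  "tensor_act Ca Cc C1 Ba Bc B1 act d (y_vec Cc C1 a) (y_vec Bc B1 b) w =
    (\<Sum>p\<in>tuples (Ca \<union> Cc \<union> C1) d \<times> tuples (Ba \<union> Bc \<union> B1) d.
      of_nat (fact_c Cc a * fact_c Bc b) * coefficient_term (fst p) (snd p))"
  using w by (simp add: tensor_act_def Seq_def y_vec_def coefficient_term_def sum.cartesian_product'
      sum_distrib_left mult_ac)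

lemma coefficient_term_eq_koszul_sign:
  assumes "as \<in> tuples (Ca \<union> Cc \<union> C1) d" and "vs \<in> tuples (Ba \<union> Bc \<union> B1) d"
  shows "coefficient_term as vs =
    (if mset as = mset a \<and> mset vs = mset b
     then (-1) ^ (odd_inv C1 a + odd_inv B1 b + odd_inv B1 w) * koszul_sign C1 B1 (zip as (zip vs w)) *
       prod_mset (image_mset (\<lambda>(x, v, u). act x v u) (mset (zip as (zip vs w))))
     else 0)"
proof -
  have len: "length as = length w" "length vs = length w"
    using assms length_w by (simp_all add: length_tuples)
  have "(\<Prod>k<d. act (as ! k) (vs ! k) (w ! k)) =
      prod_mset (image_mset (\<lambda>(x, v, u). act x v u) (mset (zip as (zip vs w))))"
    using len length_w by (simp add: prod_mset_image_mset_mset)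
  then show ?thesis
    using len by (simp add: coefficient_term_def x_vec_def koszul_sign_def map_zip_triples power_add mult_ac)
qed

lemma coefficient_term_nonzeroD:
  assumes "coefficient_term as vs \<noteq> 0"
  shows "mset as = mset a" "mset vs = mset b" "\<And>k. k < d \<Longrightarrow> act (as ! k) (vs ! k) (w ! k) \<noteq> 0"
proof -
  have nz: "(x_vec C1 a as :: 'r) \<noteq> 0" "(x_vec B1 b vs :: 'r) \<noteq> 0"
    "(\<Prod>k<d. act (as ! k) (vs ! k) (w ! k)) \<noteq> 0"
    using assms unfolding coefficient_term_def by (auto dest!: mult_not_zero)
  then show "mset as = mset a" "mset vs = mset b"
    by (auto simp: x_vec_def split: if_splits)
  show "act (as ! k) (vs ! k) (w ! k) \<noteq> 0" if "k < d" for k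
    using nz(3) that by (rule prod_lessThan_nonzeroD)
qed

lemma koszul_admissible_if_nonzero:
  assumes as: "as \<in> tuples (Ca \<union> Cc \<union> C1) d" and vs: "vs \<in> tuples (Ba \<union> Bc \<union> B1) d"
    and "mset as = mset a" "mset vs = mset b" and nonzero: "\<And>k. k < d \<Longrightarrow> act (as ! k) (vs ! k) (w ! k) \<noteq> 0"
  shows "koszul_admissible C1 B1 (mset (zip as (zip vs w)))"
proof -
  have len: "length as = length w" "length vs = length w"
    using as vs length_w by (simp_all add: length_tuples)
  have "(u \<in> B1) = ((x \<in> C1) \<noteq> (v \<in> B1))" if mem: "(x, v, u) \<in> set (zip as (zip vs w))" for x v u
  proof -
    obtain k where "k < length (zip as (zip vs w))" "zip as (zip vs w) ! k = (x, v, u)"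
      using mem unfolding in_set_conv_nth by blast
    then have "k < d" "x = as ! k" "v = vs ! k" "u = w ! k"
      using len length_w by auto
    then show ?thesis
      using parity nth_mem_tuples[OF as] nth_mem_tuples[OF vs] nonzero by blast
  qed
  moreover have "\<forall>x\<in>C1. count (mset as) x \<le> 1" "\<forall>x\<in>B1. count (mset vs) x \<le> 1"
    "\<forall>x\<in>B1. count (mset w) x \<le> 1"
    using assms a b w disjoint_C disjoint_B by (simp_all add: Seq_iff_count)
  ultimately show ?thesis
    using len by (auto simp: koszul_admissible_def map_zip_triples simp flip: mset_map)
qed

lemma coefficient_term_eq_0_if_not_admissible:
  assumes as: "as \<in> tuples (Ca \<union> Cc \<union> C1) d" and vs: "vs \<in> tuples (Ba \<union> Bc \<union> B1) d"
    and "\<not> koszul_admissible C1 B1 (mset (zip as (zip vs w)))"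
  shows "coefficient_term as vs = 0"
  using koszul_admissible_if_nonzero[OF as vs] coefficient_term_nonzeroD assms(3) by blast

lemma coefficient_term_fibrewise_constant:
  assumes p: "p \<in> tuples (Ca \<union> Cc \<union> C1) d \<times> tuples (Ba \<union> Bc \<union> B1) d"
    and q: "q \<in> tuples (Ca \<union> Cc \<union> C1) d \<times> tuples (Ba \<union> Bc \<union> B1) d"
    and fibre: "mset (zip (fst p) (zip (snd p) w)) = mset (zip (fst q) (zip (snd q) w))"
  shows "coefficient_term (fst p) (snd p) = coefficient_term (fst q) (snd q)"
proof (cases "koszul_admissible C1 B1 (mset (zip (fst p) (zip (snd p) w)))")
  case True
  have len: "length (fst r) = length w" "length (snd r) = length w" if "r \<in> {p, q}" for r
    using that p q length_w by (auto simp: length_tuples)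
  have "mset (fst p) = mset (fst q)" "mset (snd p) = mset (snd q)"
    using arg_cong[OF fibre, of "image_mset fst"] arg_cong[OF fibre, of "image_mset (fst \<circ> snd)"]
      len[of p] len[of q] by (simp_all add: map_zip_triples flip: mset_map)
  moreover have "(koszul_sign C1 B1 (zip (fst q) (zip (snd q) w)) :: 'r) =
      koszul_sign C1 B1 (zip (fst p) (zip (snd p) w))"
    using True fibre[symmetric] by (rule koszul_sign_mset_eq)
  ultimately show ?thesis
    using p q fibre by (simp add: coefficient_term_eq_koszul_sign mem_Times_iff)
next
  case False
  then show ?thesis
    using coefficient_term_eq_0_if_not_admissible[of "fst p" "snd p"]
      coefficient_term_eq_0_if_not_admissible[of "fst q" "snd q"] p q fibre
    by (simp add: mem_Times_iff)
qed

lemma count_repeated_even_triple: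
  assumes as: "as \<in> tuples (Ca \<union> Cc \<union> C1) d" and vs: "vs \<in> tuples (Ba \<union> Bc \<union> B1) d"
    and "mset as = mset a" and nonzero: "\<And>k. k < d \<Longrightarrow> act (as ! k) (vs ! k) (w ! k) \<noteq> 0"
    and mem: "(x, v, u) \<in># mset (zip as (zip vs w))" and "u \<in> Bc" "x \<notin> Cc" "v \<notin> Bc"
  shows "count (mset (zip as (zip vs w))) (x, v, u) = 1"
proof -
  obtain k where "k < length (zip as (zip vs w))" "zip as (zip vs w) ! k = (x, v, u)"
    using mem unfolding set_mset_mset in_set_conv_nth by blast
  then have k: "k < d" "x = as ! k" "v = vs ! k" "u = w ! k"
    using as vs length_w by (auto simp: length_tuples)
  then have x: "x \<in> Ca \<union> Cc \<union> C1" and v: "v \<in> Ba \<union> Bc \<union> B1"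
    using nth_mem_tuples[OF as] nth_mem_tuples[OF vs] by auto
  have "u \<notin> B1"
    using \<open>u \<in> Bc\<close> disjoint_B by blast
  then have odd: "(x \<in> C1) = (v \<in> B1)"
    using parity[OF x v] nonzero k by auto
  show ?thesis
  proof (cases "x \<in> C1")
    case True
    have "count (mset (zip as (zip vs w))) (x, v, u) \<le> count (image_mset fst (mset (zip as (zip vs w)))) x"
      using count_le_count_image_mset[of _ "(x, v, u)" fst] by simp
    also have "\<dots> = count (mset a) x"
      using assms(3) as vs length_w by (simp add: map_zip_triples length_tuples flip: mset_map)
    also have "\<dots> \<le> 1"
      using a True disjoint_C by (simp add: Seq_iff_count)
    finally show ?thesis
      using mem by (simp add: le_Suc_eq)
  next
    case False
    then have "x \<in> Ca" "v \<in> Ba"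
      using x v odd assms(7,8) by auto
    then have "u \<in> Ba"
      using closed nonzero k by blast
    then show ?thesis
      using \<open>u \<in> Bc\<close> disjoint_ac by blast
  qed
qed

lemma fact_c_dvd_card_fibre:
  assumes p: "p \<in> tuples (Ca \<union> Cc \<union> C1) d \<times> tuples (Ba \<union> Bc \<union> B1) d"
    and nonzero: "coefficient_term (fst p) (snd p) \<noteq> 0"
  shows "fact_c Bc w dvd fact_c Cc a * fact_c Bc b *
    card {q \<in> tuples (Ca \<union> Cc \<union> C1) d \<times> tuples (Ba \<union> Bc \<union> B1) d.
      mset (zip (fst q) (zip (snd q) w)) = mset (zip (fst p) (zip (snd p) w))}"
proof -
  define M where "M = mset (zip (fst p) (zip (snd p) w))"
  define R where "R = mset_fact_on (set w - Bc) (mset w)"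
  note nz = coefficient_term_nonzeroD[OF nonzero]
  have len: "length (fst p) = length w" "length (snd p) = length w"
    using p length_w by (auto simp: length_tuples)
  have images: "image_mset fst M = mset a" "image_mset (fst \<circ> snd) M = mset b"
    "image_mset (snd \<circ> snd) M = mset w"
    using nz len by (simp_all add: M_def map_zip_triples flip: mset_map)
  have "set_mset M \<subseteq> set (fst p) \<times> set (snd p) \<times> UNIV"
    unfolding M_def by (auto dest: set_zip_leftD set_zip_rightD)
  moreover have "set (fst p) \<subseteq> Ca \<union> Cc \<union> C1" "set (snd p) \<subseteq> Ba \<union> Bc \<union> B1"
    using p by (auto simp: tuples_def)
  ultimately have "set_mset M \<subseteq> (Ca \<union> Cc \<union> C1) \<times> (Ba \<union> Bc \<union> B1) \<times> UNIV"
    by blast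
  then have "card {q \<in> tuples (Ca \<union> Cc \<union> C1) d \<times> tuples (Ba \<union> Bc \<union> B1) d.
      mset (zip (fst q) (zip (snd q) w)) = M} * mset_fact M = fact_c Bc w * R"
    using card_lifts_mult_mset_fact[OF images(3)] mset_fact_split[of Bc "mset w"] finite_B
    by (simp add: card_fibre_eq_card_lifts[OF length_w] fact_c_eq_mset_fact_on R_def)
  moreover have "mset_fact M dvd mset_fact_on Cc (image_mset fst M) * mset_fact_on Bc (image_mset (fst \<circ> snd) M) *
      mset_fact_on (set_mset (image_mset (snd \<circ> snd) M) - Bc) (image_mset (snd \<circ> snd) M)"
  proof (rule mset_fact_dvd_triples)
    show "finite Cc" "finite Bc"
      using finite_C finite_B by simp_all
    show "count M (x, v, u) = 1" if "(x, v, u) \<in># M" "u \<in> Bc" "x \<notin> Cc" "v \<notin> Bc" for x v u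
      using count_repeated_even_triple[of "fst p" "snd p" x v u] that p nz by (simp add: M_def mem_Times_iff)
  qed
  then have "mset_fact M dvd fact_c Cc a * fact_c Bc b * R"
    by (simp only: images fact_c_eq_mset_fact_on R_def set_mset_mset)
  moreover have "R \<noteq> 0"
    by (simp add: R_def mset_fact_on_def)
  ultimately show ?thesis
    unfolding M_def by (rule dvd_mult_if_mult_eq_mult)
qed

lemma fact_c_dvd_tensor_act_y_vec:
  "of_nat (fact_c Bc w) dvd tensor_act Ca Cc C1 Ba Bc B1 act d (y_vec Cc C1 a) (y_vec Bc B1 b) w"
  unfolding tensor_act_y_vec_eq_sum
proof (rule dvd_sum_if_fibrewise_constant[where \<kappa> = "\<lambda>p. mset (zip (fst p) (zip (snd p) w))"])
  let ?P = "tuples (Ca \<union> Cc \<union> C1) d \<times> tuples (Ba \<union> Bc \<union> B1) d"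
  show "finite ?P"
    using finite_C finite_B by (simp add: finite_tuples)
  show "of_nat (fact_c Cc a * fact_c Bc b) * coefficient_term (fst p) (snd p) =
      of_nat (fact_c Cc a * fact_c Bc b) * coefficient_term (fst q) (snd q)"
    if "p \<in> ?P" "q \<in> ?P" "mset (zip (fst p) (zip (snd p) w)) = mset (zip (fst q) (zip (snd q) w))" for p q
    using coefficient_term_fibrewise_constant[OF that] by simp
  show "of_nat (fact_c Bc w) dvd of_nat (card {q \<in> ?P. mset (zip (fst q) (zip (snd q) w)) =
      mset (zip (fst p) (zip (snd p) w))}) * (of_nat (fact_c Cc a * fact_c Bc b) * coefficient_term (fst p) (snd p))"
    if "p \<in> ?P" "of_nat (fact_c Cc a * fact_c Bc b) * coefficient_term (fst p) (snd p) \<noteq> 0" for p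
    using that by (intro of_nat_dvd_of_nat_mult_mult fact_c_dvd_card_fibre) auto
qed

end

lemma tensor_act_sum_left:
  "tensor_act Ca Cc C1 Ba Bc B1 act d (\<lambda>as. \<Sum>i\<in>I. c i * f i as) y w =
    (\<Sum>i\<in>I. c i * tensor_act Ca Cc C1 Ba Bc B1 act d (f i) y w)"
proof (cases "w \<in> tuples (Ba \<union> Bc \<union> B1) d")
  case True
  let ?C = "tuples (Ca \<union> Cc \<union> C1) d" and ?B = "tuples (Ba \<union> Bc \<union> B1) d"
  let ?X = "\<lambda>as vs. (-1) ^ cross_odd C1 B1 as vs * (\<Prod>k<d. act (as ! k) (vs ! k) (w ! k))"
  have "tensor_act Ca Cc C1 Ba Bc B1 act d (\<lambda>as. \<Sum>i\<in>I. c i * f i as) y w =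
      (\<Sum>as\<in>?C. \<Sum>vs\<in>?B. \<Sum>i\<in>I. c i * (f i as * y vs * ?X as vs))"
    using True by (simp add: tensor_act_def sum_distrib_right mult.assoc)
  also have "\<dots> = (\<Sum>i\<in>I. \<Sum>as\<in>?C. \<Sum>vs\<in>?B. c i * (f i as * y vs * ?X as vs))"
    by (subst sum.swap, rule sum.cong[OF refl], rule sum.swap)
  also have "\<dots> = (\<Sum>i\<in>I. c i * tensor_act Ca Cc C1 Ba Bc B1 act d (f i) y w)"
    using True by (simp add: tensor_act_def sum_distrib_left mult.assoc)
  finally show ?thesis .
qed (simp add: tensor_act_def)

lemma tensor_act_sum_right:
  "tensor_act Ca Cc C1 Ba Bc B1 act d eta (\<lambda>vs. \<Sum>j\<in>J. c j * g j vs) w =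
    (\<Sum>j\<in>J. c j * tensor_act Ca Cc C1 Ba Bc B1 act d eta (g j) w)"
proof (cases "w \<in> tuples (Ba \<union> Bc \<union> B1) d")
  case True
  let ?C = "tuples (Ca \<union> Cc \<union> C1) d" and ?B = "tuples (Ba \<union> Bc \<union> B1) d"
  let ?X = "\<lambda>as vs. (-1) ^ cross_odd C1 B1 as vs * (\<Prod>k<d. act (as ! k) (vs ! k) (w ! k))"
  have "tensor_act Ca Cc C1 Ba Bc B1 act d eta (\<lambda>vs. \<Sum>j\<in>J. c j * g j vs) w =
      (\<Sum>as\<in>?C. \<Sum>vs\<in>?B. \<Sum>j\<in>J. c j * (eta as * g j vs * ?X as vs))"
    using True by (simp add: tensor_act_def sum_distrib_left sum_distrib_right mult_ac)
  also have "\<dots> = (\<Sum>j\<in>J. \<Sum>as\<in>?C. \<Sum>vs\<in>?B. c j * (eta as * g j vs * ?X as vs))"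
    by (subst sum.swap, rule sum.cong[OF refl], rule sum.swap)
  also have "\<dots> = (\<Sum>j\<in>J. c j * tensor_act Ca Cc C1 Ba Bc B1 act d eta (g j) w)"
    using True by (simp add: tensor_act_def sum_distrib_left mult.assoc)
  finally show ?thesis .
qed (simp add: tensor_act_def)

lemma calibrated_superalgebraD:
  assumes "calibrated_superalgebra Ca Cc C1 mul one"
  shows "finite (Ca \<union> Cc \<union> C1)" "C1 \<inter> (Ca \<union> Cc) = {}"
proof -
  note A = assms[unfolded calibrated_superalgebra_def Let_def]
  show "finite (Ca \<union> Cc \<union> C1)"
    using A by blast
  have "Ca \<inter> C1 = {}" "Cc \<inter> C1 = {}"
    using A by simp_all
  then show "C1 \<inter> (Ca \<union> Cc) = {}"
    by blast
qed

lemma calibrated_supermoduleD: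
  assumes "calibrated_supermodule Ca Cc C1 mul one Ba Bc B1 act"
  shows "finite (Ba \<union> Bc \<union> B1)" "B1 \<inter> (Ba \<union> Bc) = {}" "Ba \<inter> Bc = {}"
    and "\<And>x v u. x \<in> Ca \<union> Cc \<union> C1 \<Longrightarrow> v \<in> Ba \<union> Bc \<union> B1 \<Longrightarrow> act x v u \<noteq> 0 \<Longrightarrow>
      (u \<in> B1) = ((x \<in> C1) \<noteq> (v \<in> B1))"
    and "\<And>x v u. x \<in> Ca \<Longrightarrow> v \<in> Ba \<Longrightarrow> act x v u \<noteq> 0 \<Longrightarrow> u \<in> Ba"
proof -
  note V = assms[unfolded calibrated_supermodule_def Let_def]
  show "finite (Ba \<union> Bc \<union> B1)" "Ba \<inter> Bc = {}"
    using V by simp_all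
  have "Ba \<inter> B1 = {}" "Bc \<inter> B1 = {}"
    using V by simp_all
  then show "B1 \<inter> (Ba \<union> Bc) = {}"
    by blast
  show "(u \<in> B1) = ((x \<in> C1) \<noteq> (v \<in> B1))"
    if "x \<in> Ca \<union> Cc \<union> C1" "v \<in> Ba \<union> Bc \<union> B1" "act x v u \<noteq> 0" for x v u
    using V that by blast
  show "u \<in> Ba" if "x \<in> Ca" "v \<in> Ba" "act x v u \<noteq> 0" for x v u
    using V that by blast
qed

theorem lemma3p16:
  fixes Ca Cc C1 :: "'c::linorder set"
    and Ba Bc B1 :: "'b::linorder set"
    and mul :: "'c \<Rightarrow> 'c \<Rightarrow> 'c \<Rightarrow> 'r::{idom, ring_char_0}"
    and one :: "'c \<Rightarrow> 'r"
    and act :: "'c \<Rightarrow> 'b \<Rightarrow> 'b \<Rightarrow> 'r"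
    and d :: nat
    and eta :: "'c list \<Rightarrow> 'r" and y :: "'b list \<Rightarrow> 'r"
  assumes "pid_ring TYPE('r)"
    and "calibrated_superalgebra Ca Cc C1 mul one"
    and "calibrated_supermodule Ca Cc C1 mul one Ba Bc B1 act"
    and "eta \<in> Gamma_tilde Ca Cc C1 d"
    and "y \<in> Gamma_tilde Ba Bc B1 d"
  shows "tensor_act Ca Cc C1 Ba Bc B1 act d eta y \<in> Gamma_tilde Ba Bc B1 d"
proof -
  note A = calibrated_superalgebraD[OF assms(2)] and V = calibrated_supermoduleD[OF assms(3)]
  obtain ca where eta: "eta = (\<lambda>as. \<Sum>a\<in>Seq Ca Cc C1 d. ca a * y_vec Cc C1 a as)"
    using assms(4) by (auto simp: Gamma_tilde_def)
  obtain cb where y: "y = (\<lambda>vs. \<Sum>b\<in>Seq Ba Bc B1 d. cb b * y_vec Bc B1 b vs)"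
    using assms(5) by (auto simp: Gamma_tilde_def)
  show ?thesis
  proof (rule Gamma_tildeI[OF V(1,2)])
    show "tensor_act Ca Cc C1 Ba Bc B1 act d eta y w = 0" if "w \<notin> tuples (Ba \<union> Bc \<union> B1) d" for w
      using that by (simp add: tensor_act_def)
    show "supersymmetric B1 (tensor_act Ca Cc C1 Ba Bc B1 act d eta y)"
      using V(4) supersymmetric_Gamma_tilde[OF assms(4) A(2)] supersymmetric_Gamma_tilde[OF assms(5) V(2)]
      by (rule supersymmetric_tensor_act)
    show "of_nat (fact_c Bc w) dvd tensor_act Ca Cc C1 Ba Bc B1 act d eta y w"
      if w: "w \<in> Seq Ba Bc B1 d" for w
      unfolding eta y tensor_act_sum_left tensor_act_sum_right
    proof (intro dvd_sum dvd_mult)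
      fix a b assume "a \<in> Seq Ca Cc C1 d" "b \<in> Seq Ba Bc B1 d"
      then show "of_nat (fact_c Bc w) dvd tensor_act Ca Cc C1 Ba Bc B1 act d (y_vec Cc C1 a) (y_vec Bc B1 b) w"
        using fact_c_dvd_tensor_act_y_vec[of Ca Cc C1 Ba Bc B1 act a d b w] A V w by simp
    qed
  qed
qed

end
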